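(* Let $\mathbb M=M_1\diamond\cdots\diamond M_r\in\mathcal{CM}$ with each $M_j$ a basis element of $\mathcal AM_{-1}$, and let $\mathbb F\in\mathcal{CF}$ be a clumped forest with $\Phi(\mathbb F)=\mathbb M$. Let $\mathcal B$ be the set of $r$-tuples $(\tau_1,\dots,\tau_r)$ of aromatic trees such that $\tau_1\cdots\tau_r=\mathbb F$ and $\Phi(\tau_j)=M_j$ for every $j=1,\dots,r$. Then $|\mathcal B|=\sigma^{ext}(\mathbb M)/\sigma^{ext}(\mathbb F)$.
   Context: Fix a finite set $C$. Multi-indices: monomials $x^{\mathbf k}$ in variables $x^a_j$ ($a\in C$, $j\ge-1$) of weight $\sum jk^a_j$; $M_n$ is the span of monomials of weight $n$ ($n=-1,0$, non-constant for $n=0$); $S(\cdot)$ is the symmetric algebra with product $\odot$; $\mathcal AM_{-1}=S(M_0)\otimes M_{-1}$, whose basis elements are $x^{\kappa^1}\odot\cdots\odot x^{\kappa^m}\odot x^{\mathbf k}$; $\mathcal{CM}=S(\mathcal AM_{-1})$ with product $\diamond$. Trees: an aromatic tree is a finite directed graph with $C$-decorated vertices in which each vertex has exactly one outgoing edge except the root, up to isomorphism (the root component is a tree, the others are aromas); $\mathcal{CF}=S(\mathcal AT)$ is the free commutative algebra on aromatic trees (clumped forests; product by juxtaposition, each aromatic tree being one factor). Fertility map: $\Phi(\mathbf a\tau)=\Phi(a^1)\odot\cdots\odot\Phi(a^n)\odot\Phi(\tau)$ for $\mathbf a=a^1\cdots a^n$, where for a tree or aroma $\Phi=\prod_v x^{d(v)}_{f(v)-1}$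 with $d(v)$ the decoration and $f(v)$ the number of edges ending at $v$; on $\mathcal{CF}$, $\Phi(\pi_1\cdots\pi_r)=\Phi(\pi_1)\diamond\cdots\diamond\Phi(\pi_r)$. External symmetry factors: for pairwise distinct $Y^i$, $\sigma^{ext}((Y^1)^{\diamond p_1}\diamond\cdots\diamond(Y^n)^{\diamond p_n})=\prod p_i!$; for pairwise distinct aromatic trees $\pi^i$, $\sigma^{ext}((\pi^1)^{p_1}\cdots(\pi^n)^{p_n})=\prod p_i!$. *)

theory Defs
  imports Complex_Main "HOL-Library.Multiset"
begin

text \<open>A monomial x^k in the variables x^a_j (a in C, j >= -1) is a multiset of pairs (a, j).\<close>
type_synonym 'c monomial = "('c \<times> int) multiset"

definition mono_ok :: "'c monomial \<Rightarrow> bool" where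
  "mono_ok m \<longleftrightarrow> (\<forall>x \<in># m. snd x \<ge> -1)"

definition weight :: "'c monomial \<Rightarrow> int" where
  "weight m = (\<Sum>x \<in># m. snd x)"

text \<open>Basis element of AM_{-1} = S(M_0) tensor M_{-1}:
  a multiset of non-constant weight-0 monomials (the odot-factors from S(M_0))
  together with one weight -1 monomial.\<close>
type_synonym 'c am_basis = "'c monomial multiset \<times> 'c monomial"

definition is_AM_basis :: "'c am_basis \<Rightarrow> bool" where
  "is_AM_basis B \<longleftrightarrow>
     (\<forall>m \<in># fst B. mono_ok m \<and> m \<noteq> {#} \<and> weight m = 0) \<and>
     mono_ok (snd B) \<and> weight (snd B) = -1"

text \<open>A raw aromatic tree (n, d, p, rho): vertices {0..<n}, decoration d, root rho,
  and every non-root vertex v has exactly one outgoing edge v -> p v.\<close>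
type_synonym 'c raw_at = "nat \<times> (nat \<Rightarrow> 'c) \<times> (nat \<Rightarrow> nat) \<times> nat"

definition raw_wf :: "'c raw_at \<Rightarrow> bool" where
  "raw_wf r = (case r of (n, d, p, \<rho>) \<Rightarrow> \<rho> < n \<and> (\<forall>v<n. v \<noteq> \<rho> \<longrightarrow> p v < n))"

definition raw_iso :: "'c raw_at \<Rightarrow> 'c raw_at \<Rightarrow> bool" where
  "raw_iso r r' = (case r of (n, d, p, \<rho>) \<Rightarrow> case r' of (n', d', p', \<rho>') \<Rightarrow>
     (\<exists>f. bij_betw f {0..<n} {0..<n'} \<and> f \<rho> = \<rho>' \<and>
          (\<forall>v<n. d' (f v) = d v) \<and> (\<forall>v<n. v \<noteq> \<rho> \<longrightarrow> p' (f v) = f (p v))))"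

definition at_class :: "'c raw_at \<Rightarrow> 'c raw_at set" where
  "at_class r = {r'. raw_wf r' \<and> raw_iso r r'}"

definition aromatic_trees :: "'c raw_at set set" where
  "aromatic_trees = {at_class r | r. raw_wf r}"

definition raw_step :: "'c raw_at \<Rightarrow> nat \<Rightarrow> nat" where
  "raw_step r v = (case r of (n, d, p, \<rho>) \<Rightarrow> if v = \<rho> then \<rho> else p v)"

text \<open>Weak connectivity in a functional graph: the forward orbits meet.\<close>
definition raw_conn :: "'c raw_at \<Rightarrow> nat \<Rightarrow> nat \<Rightarrow> bool" where
  "raw_conn r u v \<longleftrightarrow> (\<exists>i j. (raw_step r ^^ i) u = (raw_step r ^^ j) v)"

definition raw_verts :: "'c raw_at \<Rightarrow> nat set" where
  "raw_verts r = {0..<fst r}"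

definition raw_root :: "'c raw_at \<Rightarrow> nat" where
  "raw_root r = snd (snd (snd r))"

definition raw_fert :: "'c raw_at \<Rightarrow> nat \<Rightarrow> nat" where
  "raw_fert r v = card {u \<in> raw_verts r. u \<noteq> raw_root r \<and> fst (snd (snd r)) u = v}"

definition raw_mono :: "'c raw_at \<Rightarrow> nat set \<Rightarrow> 'c monomial" where
  "raw_mono r V = image_mset (\<lambda>v. (fst (snd r) v, int (raw_fert r v) - 1)) (mset_set V)"

definition raw_root_comp :: "'c raw_at \<Rightarrow> nat set" where
  "raw_root_comp r = {v \<in> raw_verts r. raw_conn r v (raw_root r)}"

definition raw_aromas :: "'c raw_at \<Rightarrow> nat set set" where
  "raw_aromas r = {{v \<in> raw_verts r. raw_conn r u v} | u. u \<in> raw_verts r \<and> u \<notin> raw_root_comp r}"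

text \<open>Fertility map Phi(a^1 ... a^n tau) = Phi(a^1) odot ... odot Phi(a^n) odot Phi(tau).\<close>
definition raw_Phi :: "'c raw_at \<Rightarrow> 'c am_basis" where
  "raw_Phi r = (image_mset (raw_mono r) (mset_set (raw_aromas r)), raw_mono r (raw_root_comp r))"

definition Phi_at :: "'c raw_at set \<Rightarrow> 'c am_basis" where
  "Phi_at T = raw_Phi (SOME r. r \<in> T)"

text \<open>Clumped forests: elements of CF = S(AT), i.e. finite multisets of aromatic trees;
  CM basis elements are multisets of AM_{-1} basis elements; Phi on CF is multiplicative.\<close>
definition Phi_CF :: "'c raw_at set multiset \<Rightarrow> 'c am_basis multiset" where
  "Phi_CF F = image_mset Phi_at F"

definition sigma_ext :: "'a multiset \<Rightarrow> nat" where
  "sigma_ext M = (\<Prod>x \<in> set_mset M. fact (count M x))"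

end

theory Submission
  imports Defs
begin

text \<open>Choose the tree \<open>\<tau>\<^sub>1\<close> first: it must be one of the distinct trees \<open>\<pi>\<close> of \<open>\<bbbF>\<close>
  with \<open>\<Phi>(\<pi>) = M\<^sub>1\<close>, and the remaining trees form a tuple for \<open>\<bbbF>\<close> with one copy of \<open>\<pi>\<close>
  removed and \<open>M\<^sub>2 \<diamond> \<dots> \<diamond> M\<^sub>r\<close>. Removing one copy of \<open>\<pi>\<close> divides \<open>\<sigma>\<^sup>e\<^sup>x\<^sup>t(\<bbbF>)\<close> by its
  multiplicity, and these multiplicities sum to the multiplicity of \<open>M\<^sub>1\<close> in \<open>\<bbbM>\<close>; so by
  induction on \<open>r\<close>, \<open>|\<B>| \<cdot> \<sigma>\<^sup>e\<^sup>x\<^sup>t(\<bbbF>) = \<sigma>\<^sup>e\<^sup>x\<^sup>t(\<bbbM>)\<close>. Only the fibres of \<open>\<Phi>\<close> matter, so the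
  count holds for an arbitrary map \<open>g\<close> in place of \<open>\<Phi>\<close>.\<close>

lemma sigma_ext_gt_0: "sigma_ext M > 0"
  unfolding sigma_ext_def by (simp add: prod_pos)

lemma sigma_ext_conv_prod_superset:
  assumes "finite A" and "set_mset M \<subseteq> A"
  shows "sigma_ext M = (\<Prod>x\<in>A. fact (count M x))"
  unfolding sigma_ext_def
  by (rule prod.mono_neutral_left) (use assms in \<open>auto simp: not_in_iff\<close>)

lemma sigma_ext_add_mset:
  "sigma_ext (add_mset x M) = count (add_mset x M) x * sigma_ext M"
proof -
  let ?A = "insert x (set_mset M)"
  have "(\<Prod>y\<in>?A - {x}. fact (count (add_mset x M) y)) = (\<Prod>y\<in>?A - {x}. fact (count M y))"
    by (rule prod.cong) auto
  then have "sigma_ext (add_mset x M) = fact (Suc (count M x)) * (\<Prod>y\<in>?A - {x}. fact (count M y))"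
    by (simp add: sigma_ext_def prod.insert_remove)
  moreover have "sigma_ext M = fact (count M x) * (\<Prod>y\<in>?A - {x}. fact (count M y))"
    using sigma_ext_conv_prod_superset[OF _ subset_insertI] by (simp add: prod.insert_remove)
  ultimately show ?thesis by (simp add: algebra_simps)
qed

lemma sigma_ext_diff_singleton:
  "x \<in># M \<Longrightarrow> sigma_ext M = count M x * sigma_ext (M - {#x#})"
  using sigma_ext_add_mset[of x "M - {#x#}"] by (simp add: insert_DiffM)

definition lifts :: "('a \<Rightarrow> 'b) \<Rightarrow> 'a multiset \<Rightarrow> 'b list \<Rightarrow> 'a list set" where
  "lifts g F bs = {ts. mset ts = F \<and> map g ts = bs}"

lemma finite_lifts: "finite (lifts g F bs)"
proof (rule finite_subset)
  show "lifts g F bs \<subseteq> {ts. set ts \<subseteq> set_mset F \<and> length ts = size F}"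
    unfolding lifts_def by auto
qed (simp add: finite_lists_length_eq)

lemma lifts_Nil: "lifts g {#} [] = {[]}"
  unfolding lifts_def by auto

lemma lifts_Cons:
  "lifts g F (b # bs) = (\<Union>t\<in>{t \<in> set_mset F. g t = b}. (#) t ` lifts g (F - {#t#}) bs)"
  unfolding lifts_def
  by (auto simp: Cons_eq_map_conv insert_DiffM)

lemma card_lifts_mult_sigma_ext:
  "image_mset g F = mset bs \<Longrightarrow> card (lifts g F bs) * sigma_ext F = sigma_ext (mset bs)"
proof (induction bs arbitrary: F)
  case Nil
  then show ?case by (simp add: lifts_Nil sigma_ext_def)
next
  case (Cons b bs F)
  define T where "T = {t \<in> set_mset F. g t = b}"
  have card_term: "card ((#) t ` lifts g (F - {#t#}) bs) * sigma_ext F = count F t * sigma_ext (mset bs)"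
    if "t \<in> T" for t
  proof -
    have t: "t \<in># F" "g t = b" using that by (auto simp: T_def)
    then have "image_mset g (F - {#t#}) = mset bs"
      using Cons.prems by (simp add: image_mset_Diff)
    then show ?thesis
      using Cons.IH sigma_ext_diff_singleton[OF t(1)] by (simp add: card_image)
  qed
  have multiplicity: "(\<Sum>t\<in>T. count F t) = count (mset (b # bs)) b"
    unfolding Cons.prems[symmetric] count_image_mset T_def by (rule sum.cong) auto
  have "card (lifts g F (b # bs)) * sigma_ext F
      = (\<Sum>t\<in>T. card ((#) t ` lifts g (F - {#t#}) bs)) * sigma_ext F"
    unfolding lifts_Cons T_def[symmetric]
    by (subst card_UN_disjoint) (auto simp: T_def finite_lifts)
  also have "\<dots> = (\<Sum>t\<in>T. count F t) * sigma_ext (mset bs)"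
    by (simp add: sum_distrib_right card_term)
  also have "\<dots> = sigma_ext (mset (b # bs))"
    unfolding multiplicity by (simp add: sigma_ext_add_mset)
  finally show ?case .
qed

theorem proposition4p5:
  fixes Ms :: "('c::finite) am_basis list"
    and F :: "'c raw_at set multiset"
  assumes "\<forall>j < length Ms. is_AM_basis (Ms ! j)"
    and "set_mset F \<subseteq> aromatic_trees"
    and "Phi_CF F = mset Ms"
  shows "real (card {ts. length ts = length Ms \<and> set ts \<subseteq> aromatic_trees \<and>
                         mset ts = F \<and> (\<forall>j < length Ms. Phi_at (ts ! j) = Ms ! j)})
         = real (sigma_ext (mset Ms)) / real (sigma_ext F)"
proof -
  have "{ts. length ts = length Ms \<and> set ts \<subseteq> aromatic_trees \<and>
             mset ts = F \<and> (\<forall>j < length Ms. Phi_at (ts ! j) = Ms ! j)} = lifts Phi_at F Ms"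
    using assms(2) by (auto simp: lifts_def list_eq_iff_nth_eq)
  moreover have "card (lifts Phi_at F Ms) * sigma_ext F = sigma_ext (mset Ms)"
    using assms(3) by (intro card_lifts_mult_sigma_ext) (simp add: Phi_CF_def)
  ultimately show ?thesis
    using sigma_ext_gt_0[of F] by (simp add: field_simps flip: of_nat_mult)
qed

end
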